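(* If a Banach space $Z$ admits a uniform embedding into $L_2$, then $Z$ (with its norm metric) is $\Lambda$-nontrivial.
   Context: A uniform embedding is an invertible map $f$ such that $f$ and $f^{-1}$ are uniformly continuous. A map $f:X\to L_2$ is $\tau$-thresholding if $d(x,y)\ge\tau$ implies $\|f(x)-f(y)\|_2\ge\tau$. Define $\Lambda_\tau(X,\varepsilon)=\inf\big\{\sup_{x,y\in X,\ d(x,y)\ge\varepsilon\tau}\frac{\varepsilon\|f(x)-f(y)\|_2}{d(x,y)}: f:X\to L_2\text{ is }\tau\text{-thresholding}\big\}$ and $\Lambda(X,\varepsilon)=\sup_{\tau>0}\Lambda_\tau(X,\varepsilon)$. $(X,d)$ is $\Lambda$-nontrivial if $\liminf_{\varepsilon\to0}\Lambda(X,\varepsilon)=0$. *)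

theory Defs
  imports "HOL-Analysis.Analysis"
begin

text \<open>The Hilbert space L_2 (= L_2[0,1]) is modelled, up to linear isometry, by the
  separable infinite-dimensional Hilbert space l_2 of square-summable real sequences.\<close>

definition l2_space :: "(nat \<Rightarrow> real) set" where
  "l2_space = {u. summable (\<lambda>n. (u n)\<^sup>2)}"

definition l2_dist :: "(nat \<Rightarrow> real) \<Rightarrow> (nat \<Rightarrow> real) \<Rightarrow> real" where
  "l2_dist u v = sqrt (\<Sum>n. (u n - v n)\<^sup>2)"

definition uniform_embedding_L2 :: "('a::metric_space \<Rightarrow> (nat \<Rightarrow> real)) \<Rightarrow> bool" where
  "uniform_embedding_L2 f \<longleftrightarrow>
     (\<forall>x. f x \<in> l2_space) \<and> inj f \<and>
     (\<forall>e>0. \<exists>d>0. \<forall>x y. dist x y < d \<longrightarrow> l2_dist (f x) (f y) < e) \<and>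
     (\<forall>e>0. \<exists>d>0. \<forall>x y. l2_dist (f x) (f y) < d \<longrightarrow> dist x y < e)"

definition thresholding :: "real \<Rightarrow> ('a::metric_space \<Rightarrow> (nat \<Rightarrow> real)) \<Rightarrow> bool" where
  "thresholding \<tau> f \<longleftrightarrow>
     (\<forall>x. f x \<in> l2_space) \<and> (\<forall>x y. dist x y \<ge> \<tau> \<longrightarrow> l2_dist (f x) (f y) \<ge> \<tau>)"

text \<open>Values in [0, \<infinity>]: sup over the empty set is 0, inf over the empty set is \<infinity>.\<close>

definition Lambda_tau :: "'a::metric_space itself \<Rightarrow> real \<Rightarrow> real \<Rightarrow> ennreal" where
  "Lambda_tau _ \<tau> \<epsilon> =
     (INF f \<in> {f :: 'a \<Rightarrow> nat \<Rightarrow> real. thresholding \<tau> f}.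
        (SUP p \<in> {p :: 'a \<times> 'a. dist (fst p) (snd p) \<ge> \<epsilon> * \<tau>}.
           ennreal (\<epsilon> * l2_dist (f (fst p)) (f (snd p)) / dist (fst p) (snd p))))"

definition Lambda :: "'a::metric_space itself \<Rightarrow> real \<Rightarrow> ennreal" where
  "Lambda X \<epsilon> = (SUP \<tau> \<in> {0<..}. Lambda_tau X \<tau> \<epsilon>)"

definition Lambda_nontrivial :: "'a::metric_space itself \<Rightarrow> bool" where
  "Lambda_nontrivial X \<longleftrightarrow> Liminf (at_right 0) (\<lambda>\<epsilon>. Lambda X \<epsilon>) = 0"

end

theory Submission
  imports Defs
begin

(*
  Let f be a uniform embedding of the Banach space Z into l2.
  By uniform continuity of the inverse there is \<rho> > 0 with
  l2_dist (f x) (f y) < \<rho> \<Longrightarrow> dist x y < 1.  For a given \<tau> > 0 the rescaled map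
  g z = (\<tau>/\<rho>) f (z/\<tau>) is therefore \<tau>-thresholding.  On the other hand, uniform
  continuity of f on a normed (hence metrically convex) space makes f coarsely
  Lipschitz: splitting the segment [x,y] into short pieces gives
  l2_dist (f x) (f y) \<le> \<theta> (dist x y / \<eta> + 1).  Choosing \<theta> = \<rho>\<delta>/2, this yields
  \<epsilon> l2_dist (g a) (g b) / dist a b \<le> \<delta> whenever dist a b \<ge> \<epsilon>\<tau> and \<epsilon> < \<eta>,
  uniformly in \<tau>.  Hence \<Lambda>(Z,\<epsilon>) \<le> \<delta> for all small \<epsilon>, so the lower limit is 0.
*)

lemma l2_summable_diff:
  assumes "u \<in> l2_space" "v \<in> l2_space"
  shows "summable (\<lambda>n. (u n - v n)\<^sup>2)"
proof (rule summable_comparison_test')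
  show "summable (\<lambda>n. 2 * (u n)\<^sup>2 + 2 * (v n)\<^sup>2)"
    using assms unfolding l2_space_def by (intro summable_add summable_mult) auto
  fix n :: nat
  have "(u n - v n)\<^sup>2 + (u n + v n)\<^sup>2 = 2 * (u n)\<^sup>2 + 2 * (v n)\<^sup>2"
    by (simp add: power2_eq_square algebra_simps)
  then have "(u n - v n)\<^sup>2 \<le> 2 * (u n)\<^sup>2 + 2 * (v n)\<^sup>2"
    using zero_le_power2[of "u n + v n"] by linarith
  then show "norm ((u n - v n)\<^sup>2) \<le> 2 * (u n)\<^sup>2 + 2 * (v n)\<^sup>2" by simp
qed

lemma l2_dist_nonneg:
  assumes "u \<in> l2_space" "v \<in> l2_space"
  shows "0 \<le> l2_dist u v"
  unfolding l2_dist_def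
  by (rule real_sqrt_ge_zero, rule suminf_nonneg[OF l2_summable_diff[OF assms]]) simp

lemma l2_dist_self: "l2_dist u u = 0"
  unfolding l2_dist_def by simp

text \<open>Every finite section of the difference has Euclidean length at most the
  l2 distance; this reduces the triangle inequality to the finite-dimensional one.\<close>

lemma l2_partial_le:
  assumes "u \<in> l2_space" "v \<in> l2_space"
  shows "L2_set (\<lambda>n. u n - v n) {..<N} \<le> l2_dist u v"
  unfolding L2_set_def l2_dist_def
  by (rule real_sqrt_le_mono, rule sum_le_suminf[OF l2_summable_diff[OF assms]]) auto

lemma l2_triangle:
  assumes "u \<in> l2_space" "v \<in> l2_space" "w \<in> l2_space"
  shows "l2_dist u w \<le> l2_dist u v + l2_dist v w"
proof -
  let ?s = "l2_dist u v + l2_dist v w"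
  have s_nonneg: "0 \<le> ?s"
    using l2_dist_nonneg[OF assms(1,2)] l2_dist_nonneg[OF assms(2,3)] by simp
  have "(\<Sum>n. (u n - w n)\<^sup>2) \<le> ?s\<^sup>2"
  proof (rule suminf_le_const[OF l2_summable_diff[OF assms(1,3)]])
    fix N
    have "L2_set (\<lambda>n. u n - w n) {..<N}
          \<le> L2_set (\<lambda>n. u n - v n) {..<N} + L2_set (\<lambda>n. v n - w n) {..<N}"
      using L2_set_triangle_ineq[of "\<lambda>n. u n - v n" "\<lambda>n. v n - w n"] by simp
    also have "\<dots> \<le> ?s"
      using l2_partial_le[OF assms(1,2)] l2_partial_le[OF assms(2,3)] by (rule add_mono)
    finally have "(L2_set (\<lambda>n. u n - w n) {..<N})\<^sup>2 \<le> ?s\<^sup>2"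
      by (intro power_mono) (auto simp: L2_set_def sum_nonneg)
    then show "(\<Sum>n<N. (u n - w n)\<^sup>2) \<le> ?s\<^sup>2"
      unfolding L2_set_def by (simp add: sum_nonneg)
  qed
  then have "sqrt (\<Sum>n. (u n - w n)\<^sup>2) \<le> sqrt (?s\<^sup>2)" by (rule real_sqrt_le_mono)
  then show ?thesis using s_nonneg unfolding l2_dist_def[of u w] by simp
qed

lemma l2_chain:
  assumes "\<And>k. q k \<in> l2_space"
  shows "l2_dist (q 0) (q n) \<le> (\<Sum>k<n. l2_dist (q k) (q (Suc k)))"
proof (induction n)
  case 0
  then show ?case by (simp add: l2_dist_self)
next
  case (Suc n)
  have "l2_dist (q 0) (q (Suc n)) \<le> l2_dist (q 0) (q n) + l2_dist (q n) (q (Suc n))"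
    by (rule l2_triangle[OF assms assms assms])
  then show ?case using Suc by simp
qed

lemma l2_scale_space: "u \<in> l2_space \<Longrightarrow> (\<lambda>n. c * u n) \<in> l2_space"
  unfolding l2_space_def by (simp add: power_mult_distrib summable_mult)

lemma l2_scale_dist:
  assumes "u \<in> l2_space" "v \<in> l2_space"
  shows "l2_dist (\<lambda>n. c * u n) (\<lambda>n. c * v n) = \<bar>c\<bar> * l2_dist u v"
proof -
  have "(\<Sum>n. (c * u n - c * v n)\<^sup>2) = c\<^sup>2 * (\<Sum>n. (u n - v n)\<^sup>2)"
    using suminf_mult[OF l2_summable_diff[OF assms], of "c\<^sup>2"]
    by (simp add: power_mult_distrib right_diff_distrib[symmetric])
  then show ?thesis unfolding l2_dist_def by (simp add: real_sqrt_mult)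
qed

text \<open>If distances below \<eta> are mapped to distances below \<theta>, then cutting the
  segment from x to y into \<lfloor>dist x y / \<eta>\<rfloor> + 1 equal pieces gives an affine
  bound.  This is where the linear structure of the domain is used.\<close>

lemma coarse_lipschitz:
  fixes f :: "'a::real_normed_vector \<Rightarrow> nat \<Rightarrow> real"
  assumes f_l2: "\<And>x. f x \<in> l2_space" and eta: "0 < \<eta>"
    and uc: "\<And>x y. dist x y < \<eta> \<Longrightarrow> l2_dist (f x) (f y) < \<theta>"
  shows "l2_dist (f x) (f y) \<le> \<theta> * (dist x y / \<eta> + 1)"
proof -
  define d where "d = dist x y"
  define n where "n = nat \<lfloor>d / \<eta>\<rfloor> + 1"
  have ratio_nonneg: "0 \<le> d / \<eta>" using eta unfolding d_def by simp
  have n_pos: "1 \<le> n" unfolding n_def by simp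
  have "real n = of_int \<lfloor>d / \<eta>\<rfloor> + 1" unfolding n_def using ratio_nonneg by simp
  then have n_big: "d / \<eta> < real n" and n_small: "real n \<le> d / \<eta> + 1"
    using floor_correct[of "d / \<eta>"] by linarith+
  define p where "p k = x + (real k / real n) *\<^sub>R (y - x)" for k
  have short_step: "l2_dist (f (p k)) (f (p (Suc k))) < \<theta>" for k
  proof (rule uc)
    have "p (Suc k) - p k = (1 / real n) *\<^sub>R (y - x)"
      unfolding p_def by (simp add: scaleR_left_diff_distrib[symmetric] add_divide_distrib)
    then have "dist (p k) (p (Suc k)) = norm ((1 / real n) *\<^sub>R (y - x))"
      by (metis dist_commute dist_norm)
    also have "\<dots> = d / real n"
      unfolding d_def by (simp add: dist_norm norm_minus_commute)
    also have "\<dots> < \<eta>" using n_big eta n_pos by (simp add: field_simps)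
    finally show "dist (p k) (p (Suc k)) < \<eta>" .
  qed
  have theta_pos: "0 < \<theta>"
    using short_step[of 0] l2_dist_nonneg[OF f_l2 f_l2] by (meson le_less_trans)
  have "l2_dist (f (p 0)) (f (p n)) \<le> (\<Sum>k<n. l2_dist (f (p k)) (f (p (Suc k))))"
    by (rule l2_chain) (rule f_l2)
  also have "\<dots> \<le> (\<Sum>k<n. \<theta>)" using short_step by (intro sum_mono) (simp add: less_imp_le)
  also have "\<dots> = real n * \<theta>" by simp
  also have "\<dots> \<le> (d / \<eta> + 1) * \<theta>" using n_small theta_pos by simp
  finally show ?thesis using n_pos unfolding p_def d_def by (simp add: mult.commute)
qed

text \<open>Given f and constants \<rho>, \<tau> > 0, the map z \<mapsto> (\<tau>/\<rho>) f (z/\<tau>) is the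
  candidate \<tau>-thresholding map witnessing smallness of \<Lambda>_\<tau>.\<close>

definition rescale :: "real \<Rightarrow> real \<Rightarrow> ('a::real_normed_vector \<Rightarrow> nat \<Rightarrow> real) \<Rightarrow> 'a \<Rightarrow> nat \<Rightarrow> real"
  where "rescale \<tau> \<rho> f z = (\<lambda>n. (\<tau> / \<rho>) * f ((1 / \<tau>) *\<^sub>R z) n)"

lemma dist_scaleR_inverse:
  fixes a b :: "'a::real_normed_vector"
  assumes "0 < \<tau>"
  shows "dist ((1 / \<tau>) *\<^sub>R a) ((1 / \<tau>) *\<^sub>R b) = dist a b / \<tau>"
  using assms by (simp add: dist_norm flip: scaleR_diff_right)

lemma rescale_dist:
  assumes f_l2: "\<And>x. f x \<in> l2_space" and "0 < \<tau>" "0 < \<rho>"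
  shows "l2_dist (rescale \<tau> \<rho> f a) (rescale \<tau> \<rho> f b)
           = (\<tau> / \<rho>) * l2_dist (f ((1 / \<tau>) *\<^sub>R a)) (f ((1 / \<tau>) *\<^sub>R b))"
  unfolding rescale_def using l2_scale_dist[OF f_l2 f_l2, of "\<tau> / \<rho>"] assms(2,3) by simp

lemma rescale_thresholding:
  fixes f :: "'a::real_normed_vector \<Rightarrow> nat \<Rightarrow> real"
  assumes f_l2: "\<And>x. f x \<in> l2_space" and tau: "0 < \<tau>" and rho: "0 < \<rho>"
    and expand: "\<And>x y. l2_dist (f x) (f y) < \<rho> \<Longrightarrow> dist x y < 1"
  shows "thresholding \<tau> (rescale \<tau> \<rho> f)"
  unfolding thresholding_def
proof (intro conjI allI impI)
  show "rescale \<tau> \<rho> f x \<in> l2_space" for x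
    unfolding rescale_def by (rule l2_scale_space[OF f_l2])
next
  fix a b :: 'a assume "\<tau> \<le> dist a b"
  then have "1 \<le> dist ((1 / \<tau>) *\<^sub>R a) ((1 / \<tau>) *\<^sub>R b)"
    using tau by (simp add: dist_scaleR_inverse)
  then have "\<rho> \<le> l2_dist (f ((1 / \<tau>) *\<^sub>R a)) (f ((1 / \<tau>) *\<^sub>R b))"
    using expand by (meson not_le)
  then have "(\<tau> / \<rho>) * \<rho> \<le> l2_dist (rescale \<tau> \<rho> f a) (rescale \<tau> \<rho> f b)"
    unfolding rescale_dist[OF f_l2 tau rho] using tau rho by (intro mult_left_mono) auto
  then show "\<tau> \<le> l2_dist (rescale \<tau> \<rho> f a) (rescale \<tau> \<rho> f b)" using rho by simp
qed

lemma rescale_ratio_bound: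
  fixes f :: "'a::real_normed_vector \<Rightarrow> nat \<Rightarrow> real"
  assumes f_l2: "\<And>x. f x \<in> l2_space" and tau: "0 < \<tau>" and rho: "0 < \<rho>" and delta: "0 < \<delta>"
    and eta: "0 < \<eta>" and uc: "\<And>x y. dist x y < \<eta> \<Longrightarrow> l2_dist (f x) (f y) < \<rho> * \<delta> / 2"
    and eps: "0 < \<epsilon>" "\<epsilon> < \<eta>" and far: "\<epsilon> * \<tau> \<le> dist a b"
  shows "\<epsilon> * l2_dist (rescale \<tau> \<rho> f a) (rescale \<tau> \<rho> f b) / dist a b \<le> \<delta>"
proof -
  define d where "d = dist a b"
  have "0 < \<epsilon> * \<tau>" using eps tau by simp
  then have d_pos: "0 < d" using far unfolding d_def by linarith
  have "l2_dist (f ((1 / \<tau>) *\<^sub>R a)) (f ((1 / \<tau>) *\<^sub>R b)) \<le> (\<rho> * \<delta> / 2) * (d / \<tau> / \<eta> + 1)"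
    using coarse_lipschitz[OF f_l2 eta uc, where x = "(1 / \<tau>) *\<^sub>R a" and y = "(1 / \<tau>) *\<^sub>R b"] tau
    by (simp add: dist_scaleR_inverse d_def)
  then have "l2_dist (rescale \<tau> \<rho> f a) (rescale \<tau> \<rho> f b) \<le> (\<tau> / \<rho>) * ((\<rho> * \<delta> / 2) * (d / \<tau> / \<eta> + 1))"
    unfolding rescale_dist[OF f_l2 tau rho] using tau rho by (intro mult_left_mono) auto
  also have "\<dots> = (\<delta> / 2) * (d / \<eta> + \<tau>)"
    using tau rho by (simp add: field_simps)
  finally have "\<epsilon> * l2_dist (rescale \<tau> \<rho> f a) (rescale \<tau> \<rho> f b) / d \<le> \<epsilon> * ((\<delta> / 2) * (d / \<eta> + \<tau>)) / d"
    using eps d_pos by (intro divide_right_mono mult_left_mono) auto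
  also have "\<dots> = (\<delta> / 2) * (\<epsilon> / \<eta>) + (\<delta> / 2) * (\<epsilon> * \<tau> / d)"
    using d_pos eta by (simp add: field_simps)
  also have "\<dots> \<le> (\<delta> / 2) * 1 + (\<delta> / 2) * 1"
    using eps eta far d_pos delta unfolding d_def by (intro add_mono mult_left_mono) auto
  finally show ?thesis unfolding d_def by simp
qed

lemma Lambda_tau_le:
  fixes g :: "'a::metric_space \<Rightarrow> nat \<Rightarrow> real"
  assumes "thresholding \<tau> g"
    and "\<And>a b. \<epsilon> * \<tau> \<le> dist a b \<Longrightarrow> \<epsilon> * l2_dist (g a) (g b) / dist a b \<le> \<delta>"
  shows "Lambda_tau TYPE('a) \<tau> \<epsilon> \<le> ennreal \<delta>"
  unfolding Lambda_tau_def
proof (rule INF_lower2)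
  show "g \<in> {f. thresholding \<tau> f}" using assms(1) by simp
  show "(SUP p \<in> {p. \<epsilon> * \<tau> \<le> dist (fst p) (snd p)}.
           ennreal (\<epsilon> * l2_dist (g (fst p)) (g (snd p)) / dist (fst p) (snd p))) \<le> ennreal \<delta>"
    using assms(2) by (intro SUP_least ennreal_leI) auto
qed

lemma Lambda_le:
  fixes f :: "'a::real_normed_vector \<Rightarrow> nat \<Rightarrow> real"
  assumes f_l2: "\<And>x. f x \<in> l2_space" and rho: "0 < \<rho>" and delta: "0 < \<delta>"
    and expand: "\<And>x y. l2_dist (f x) (f y) < \<rho> \<Longrightarrow> dist x y < 1"
    and eta: "0 < \<eta>" and uc: "\<And>x y. dist x y < \<eta> \<Longrightarrow> l2_dist (f x) (f y) < \<rho> * \<delta> / 2"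
    and eps: "0 < \<epsilon>" "\<epsilon> < \<eta>"
  shows "Lambda TYPE('a) \<epsilon> \<le> ennreal \<delta>"
  unfolding Lambda_def
proof (rule SUP_least)
  fix \<tau> :: real assume "\<tau> \<in> {0<..}"
  then have tau: "0 < \<tau>" by simp
  show "Lambda_tau TYPE('a) \<tau> \<epsilon> \<le> ennreal \<delta>"
    using rescale_thresholding[OF f_l2 tau rho expand]
      rescale_ratio_bound[OF f_l2 tau rho delta eta uc eps]
    by (rule Lambda_tau_le)
qed

lemma Liminf_eq_0_if_eventually_small:
  fixes g :: "'b \<Rightarrow> ennreal"
  assumes "F \<noteq> bot" and "\<And>\<delta>. 0 < \<delta> \<Longrightarrow> eventually (\<lambda>x. g x \<le> ennreal \<delta>) F"
  shows "Liminf F g = 0"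
proof -
  have "Liminf F g \<le> 0 + ennreal \<delta>" if "0 < \<delta>" for \<delta>
    using Liminf_le[OF assms(1) assms(2)[OF that]] by simp
  then have "Liminf F g \<le> 0" by (rule ennreal_le_epsilon)
  then show ?thesis by simp
qed

theorem lemma5p7:
  fixes f :: "'a::banach \<Rightarrow> (nat \<Rightarrow> real)"
  assumes "uniform_embedding_L2 f"
  shows "Lambda_nontrivial TYPE('a)"
  unfolding Lambda_nontrivial_def
proof (rule Liminf_eq_0_if_eventually_small)
  show "at_right (0::real) \<noteq> bot" by simp
  have f_l2: "\<And>x. f x \<in> l2_space"
    and uc: "\<forall>e>0. \<exists>d>0. \<forall>x y. dist x y < d \<longrightarrow> l2_dist (f x) (f y) < e"
    and uc_inv: "\<forall>e>0. \<exists>d>0. \<forall>x y. l2_dist (f x) (f y) < d \<longrightarrow> dist x y < e"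
    using assms unfolding uniform_embedding_L2_def by auto
  obtain \<rho> where rho: "0 < \<rho>" and expand: "\<And>x y. l2_dist (f x) (f y) < \<rho> \<Longrightarrow> dist x y < 1"
    using uc_inv by (meson zero_less_one)
  fix \<delta> :: real assume delta: "0 < \<delta>"
  then have "0 < \<rho> * \<delta> / 2" using rho by simp
  then obtain \<eta> where eta: "0 < \<eta>"
    and uc_\<eta>: "\<And>x y. dist x y < \<eta> \<Longrightarrow> l2_dist (f x) (f y) < \<rho> * \<delta> / 2"
    using uc by meson
  show "eventually (\<lambda>\<epsilon>. Lambda TYPE('a) \<epsilon> \<le> ennreal \<delta>) (at_right 0)"
    using eventually_at_right_real[OF eta]
    by eventually_elim (use Lambda_le[OF f_l2 rho delta expand eta uc_\<eta>] in auto)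
qed

end
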